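(* Let $T\ge 1$ and $\beta\in(0,1)$, and set $\gamma = \frac{1-\beta}{\beta}$. Let $\mathbf{x}$ be a random vector in $\mathbb{R}^T$ with probability density $p$ (with respect to Lebesgue measure) and $\mathbb{E}\|\mathbf{x}\|^2<\infty$. Let $q(\tilde{\mathbf{x}}\mid\mathbf{x})$ be a Markov kernel with a conditional density on $\mathbb{R}^T$. Generate the noisy observation $\tilde{\mathbf{x}}$ as follows: independently of $\mathbf{x}$, draw $B\sim\mathrm{Bernoulli}(\beta)$; if $B=1$ set $\tilde{\mathbf{x}}=\mathbf{x}$, and if $B=0$ draw $\tilde{\mathbf{x}}\sim q(\cdot\mid\mathbf{x})$. That is, the noise distribution is $$p(\tilde{\mathbf{x}}\mid\mathbf{x}) = \beta\,\delta(\tilde{\mathbf{x}}=\mathbf{x}) + (1-\beta)\,q(\tilde{\mathbf{x}}\mid\mathbf{x}).$$ Let $q(\tilde{\mathbf{x}}) = \int q(\tilde{\mathbf{x}}\mid\mathbf{x})\,p(\mathbf{x})\,d\mathbf{x}$ be the marginal density of the noisy data under $q$, let $q(\mathbf{x}\mid\tilde{\mathbf{x}}) = q(\tilde{\mathbf{x}}\mid\mathbf{x})p(\mathbf{x})/q(\tilde{\mathbf{x}})$ (defined where $q(\tilde{\mathbf{x}})>0$), and define $$g_\star(\tilde{\mathbf{x}}) = \mathbb{E}_{q(\mathbf{x}\mid\tilde{\mathbf{x}})}[\mathbf{x}] = \frac{\int \mathbf{x}\,q(\tilde{\mathbf{x}}\mid\mathbf{x})p(\mathbf{x})\,d\mathbf{x}}{q(\tilde{\mathbf{x}})},\qquad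 \omega(\tilde{\mathbf{x}}) = \frac{p(\tilde{\mathbf{x}})}{p(\tilde{\mathbf{x}})+\gamma\, q(\tilde{\mathbf{x}})}\in[0,1]$$ (where $p(\tilde{\mathbf{x}})$ denotes the data density $p$ evaluated at $\tilde{\mathbf{x}}$), on the set where $p(\tilde{\mathbf{x}})+\gamma q(\tilde{\mathbf{x}})>0$. Then, among all measurable functions $f:\mathbb{R}^T\to\mathbb{R}^T$ with $\mathbb{E}\|f(\tilde{\mathbf{x}})\|^2<\infty$, the expected squared error $$\mathbb{E}\big[(f(\tilde{\mathbf{x}})-\mathbf{x})^\top(f(\tilde{\mathbf{x}})-\mathbf{x})\big]$$ is minimized by $$f_\star(\tilde{\mathbf{x}}) = \omega(\tilde{\mathbf{x}})\,\tilde{\mathbf{x}} + \big(1-\omega(\tilde{\mathbf{x}})\big)\,g_\star(\tilde{\mathbf{x}}),$$ and any minimizer agrees with $f_\star$ almost everywhere with respect to the distribution of $\tilde{\mathbf{x}}$ (whose density is $\beta p + (1-\beta) q$).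
   Context: Here $\delta(\tilde{\mathbf{x}}=\mathbf{x})$ denotes the Dirac point mass at $\mathbf{x}$, so the noise model is a mixture: with probability $\beta$ no corruption occurs, and with probability $1-\beta$ the observation is drawn from the corruption kernel $q(\cdot\mid\mathbf{x})$. The expectation in the objective is over the joint law of $(\mathbf{x},\tilde{\mathbf{x}})$ with $\mathbf{x}\sim p$ and $\tilde{\mathbf{x}}\sim p(\cdot\mid\mathbf{x})$. *)

theory Defs
  imports "HOL-Probability.Probability"
begin

text \<open>Pairs are (x, x~).\<close>
definition noisy_joint :: "real \<Rightarrow> ('a::euclidean_space \<Rightarrow> real) \<Rightarrow> ('a \<Rightarrow> 'a \<Rightarrow> real) \<Rightarrow> ('a \<times> 'a) measure" where
  "noisy_joint \<beta> p q =
     density lborel (\<lambda>x. ennreal (p x)) \<bind> (\<lambda>x.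
       measure_pmf (bernoulli_pmf \<beta>) \<bind> (\<lambda>b.
         if b then return borel (x, x)
         else distr (density lborel (\<lambda>xt. ennreal (q x xt))) borel (\<lambda>xt. (x, xt))))"

definition q_marg :: "('a::euclidean_space \<Rightarrow> real) \<Rightarrow> ('a \<Rightarrow> 'a \<Rightarrow> real) \<Rightarrow> 'a \<Rightarrow> real" where
  "q_marg p q xt = (\<integral>x. q x xt * p x \<partial>lborel)"

definition g_star :: "('a::euclidean_space \<Rightarrow> real) \<Rightarrow> ('a \<Rightarrow> 'a \<Rightarrow> real) \<Rightarrow> 'a \<Rightarrow> 'a" where
  "g_star p q xt = (1 / q_marg p q xt) *\<^sub>R (\<integral>x. (q x xt * p x) *\<^sub>R x \<partial>lborel)"

definition omega :: "real \<Rightarrow> ('a::euclidean_space \<Rightarrow> real) \<Rightarrow> ('a \<Rightarrow> 'a \<Rightarrow> real) \<Rightarrow> 'a \<Rightarrow> real" where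
  "omega \<beta> p q xt = p xt / (p xt + ((1 - \<beta>) / \<beta>) * q_marg p q xt)"

definition f_star :: "real \<Rightarrow> ('a::euclidean_space \<Rightarrow> real) \<Rightarrow> ('a \<Rightarrow> 'a \<Rightarrow> real) \<Rightarrow> 'a \<Rightarrow> 'a" where
  "f_star \<beta> p q xt = omega \<beta> p q xt *\<^sub>R xt + (1 - omega \<beta> p q xt) *\<^sub>R g_star p q xt"

definition sq_risk :: "('a \<times> 'a) measure \<Rightarrow> ('a::euclidean_space \<Rightarrow> 'a) \<Rightarrow> real" where
  "sq_risk J f = (\<integral>z. (f (snd z) - fst z) \<bullet> (f (snd z) - fst z) \<partial>J)"

definition admissible :: "('a \<times> 'a) measure \<Rightarrow> ('a::euclidean_space \<Rightarrow> 'a) \<Rightarrow> bool" where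
  "admissible J f \<longleftrightarrow> f \<in> borel_measurable borel \<and> integrable J (\<lambda>z. (norm (f (snd z)))\<^sup>2)"

end

theory Submission
  imports Defs
begin

text \<open>Disintegrate the joint law along the observation: for every loss h,
  E h(x, x~) = \<integral> (\<beta> p(y) h(y, y) + (1 - \<beta>) \<integral> p(x) q(y|x) h(x, y) dx) dy.
  For the squared loss of an estimator f the inner expression at y is a quadratic function
  of the prediction v = f(y), with leading coefficient D(y) = \<beta> p(y) + (1 - \<beta>) q(y),
  the density of x~, and with vertex f_star(y). Completing the square pointwise and
  integrating gives E |f(x~) - x|^2 = E |f_star(x~) - x|^2 + E |f(x~) - f_star(x~)|^2,
  from which minimality and almost sure uniqueness of f_star are immediate.\<close>

lemma norm_diff_power2_le:
  fixes a b :: "'a::real_normed_vector"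
  shows "(norm (a - b))\<^sup>2 \<le> 2 * (norm a)\<^sup>2 + 2 * (norm b)\<^sup>2"
proof -
  have "(norm (a - b))\<^sup>2 \<le> (norm a + norm b)\<^sup>2"
    by (intro power_mono norm_triangle_ineq4) simp
  also have "\<dots> \<le> 2 * (norm a)\<^sup>2 + 2 * (norm b)\<^sup>2"
    using zero_le_power2[of "norm a - norm b"] by (simp add: power2_eq_square algebra_simps)
  finally show ?thesis .
qed

lemma integrable_weighted_first_moment:
  fixes w :: "'a::euclidean_space \<Rightarrow> real"
  assumes M: "sets M = sets borel" and w: "\<And>x. 0 \<le> w x"
    and "integrable M w" "integrable M (\<lambda>x. w x * (norm x)\<^sup>2)"
  shows "integrable M (\<lambda>x. w x *\<^sub>R x)"
proof (rule Bochner_Integration.integrable_bound)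
  show "integrable M (\<lambda>x. w x + w x * (norm x)\<^sup>2)"
    using assms by auto
  show "(\<lambda>x. w x *\<^sub>R x) \<in> borel_measurable M"
    using assms by (simp add: measurable_cong_sets[OF M refl])
  have "norm x \<le> 1 + (norm x)\<^sup>2" for x :: 'a
    using zero_le_power2[of "norm x - 1/2"] by (simp add: power2_eq_square algebra_simps)
  then have "w x * norm x \<le> w x * (1 + (norm x)\<^sup>2)" for x
    by (intro mult_left_mono w)
  then show "AE x in M. norm (w x *\<^sub>R x) \<le> norm (w x + w x * (norm x)\<^sup>2)"
    using w by (intro AE_I2) (simp add: algebra_simps)
qed

lemma integral_weighted_norm_diff_power2:
  fixes w :: "'a::euclidean_space \<Rightarrow> real" and v :: 'a
  assumes "integrable M w" "integrable M (\<lambda>x. w x * (norm x)\<^sup>2)" "integrable M (\<lambda>x. w x *\<^sub>R x)"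
  shows "integrable M (\<lambda>x. w x * (norm (v - x))\<^sup>2)"
    and "(\<integral>x. w x * (norm (v - x))\<^sup>2 \<partial>M)
      = (\<integral>x. w x \<partial>M) * (norm v)\<^sup>2 - 2 * (v \<bullet> (\<integral>x. w x *\<^sub>R x \<partial>M)) + (\<integral>x. w x * (norm x)\<^sup>2 \<partial>M)"
proof -
  have expand: "w x * (norm (v - x))\<^sup>2 = w x * (norm v)\<^sup>2 - 2 * (v \<bullet> (w x *\<^sub>R x)) + w x * (norm x)\<^sup>2" for x
    by (simp add: power2_norm_eq_inner inner_diff_left inner_diff_right inner_commute algebra_simps)
  have i1: "integrable M (\<lambda>x. w x * (norm v)\<^sup>2)"
    using assms(1) by simp
  have i2: "integrable M (\<lambda>x. 2 * (v \<bullet> (w x *\<^sub>R x)))"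
    by (intro integrable_mult_right integrable_inner_right assms(3))
  show "integrable M (\<lambda>x. w x * (norm (v - x))\<^sup>2)"
    unfolding expand using i1 i2 assms(2) by auto
  show "(\<integral>x. w x * (norm (v - x))\<^sup>2 \<partial>M)
      = (\<integral>x. w x \<partial>M) * (norm v)\<^sup>2 - 2 * (v \<bullet> (\<integral>x. w x *\<^sub>R x \<partial>M)) + (\<integral>x. w x * (norm x)\<^sup>2 \<partial>M)"
    unfolding expand Bochner_Integration.integral_add[OF Bochner_Integration.integrable_diff[OF i1 i2] assms(2)]
      Bochner_Integration.integral_diff[OF i1 i2] integral_mult_left_zero integral_mult_right_zero
      integral_inner_right[OF assms(3)] ..
qed

lemma quadratic_completion:
  fixes a b Q S :: real and y m c v :: "'a::real_inner"
  assumes vertex: "(a + b * Q) *\<^sub>R c = a *\<^sub>R y + b *\<^sub>R m"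
  shows "a * (norm (v - y))\<^sup>2 + b * (Q * (norm v)\<^sup>2 - 2 * (v \<bullet> m) + S)
       = a * (norm (c - y))\<^sup>2 + b * (Q * (norm c)\<^sup>2 - 2 * (c \<bullet> m) + S) + (a + b * Q) * (norm (v - c))\<^sup>2"
proof -
  have "u \<bullet> ((a + b * Q) *\<^sub>R c) = u \<bullet> (a *\<^sub>R y + b *\<^sub>R m)" for u
    using vertex by simp
  then have "b * (u \<bullet> m) = (a + b * Q) * (u \<bullet> c) - a * (u \<bullet> y)" for u
    by (simp add: inner_add_right)
  from this[of v] this[of c] show ?thesis
    by (simp add: power2_norm_eq_inner inner_diff_left inner_diff_right inner_commute algebra_simps)
qed

lemma sq_risk_nonneg: "0 \<le> sq_risk M f"
  unfolding sq_risk_def by (intro integral_nonneg_AE) simp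

locale noisy_channel =
  fixes \<beta> :: real and p :: "'a::euclidean_space \<Rightarrow> real" and q :: "'a \<Rightarrow> 'a \<Rightarrow> real"
  assumes beta: "0 < \<beta>" "\<beta> < 1"
    and p_meas [measurable]: "p \<in> borel_measurable borel"
    and p_nonneg: "\<And>x. 0 \<le> p x"
    and p_prob: "(\<integral>\<^sup>+ x. ennreal (p x) \<partial>lborel) = 1"
    and p_second_moment: "integrable (density lborel (\<lambda>x. ennreal (p x))) (\<lambda>x. (norm x)\<^sup>2)"
    and q_meas: "(\<lambda>(x, xt). q x xt) \<in> borel_measurable borel"
    and q_nonneg: "\<And>x xt. 0 \<le> q x xt"
    and q_prob: "\<And>x. (\<integral>\<^sup>+ xt. ennreal (q x xt) \<partial>lborel) = 1"
begin

abbreviation joint :: "('a \<times> 'a) measure" where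
  "joint \<equiv> noisy_joint \<beta> p q"

lemma q_measurable_pair [measurable]: "(\<lambda>(x, y). q x y) \<in> borel_measurable (borel \<Otimes>\<^sub>M borel)"
  using q_meas by (simp add: borel_prod)

definition channel :: "'a \<Rightarrow> ('a \<times> 'a) measure" where
  "channel x = measure_pmf (bernoulli_pmf \<beta>) \<bind> (\<lambda>b.
     if b then return borel (x, x)
     else distr (density lborel (\<lambda>xt. ennreal (q x xt))) borel (\<lambda>xt. (x, xt)))"

lemma joint_eq_bind_channel: "joint = density lborel (\<lambda>x. ennreal (p x)) \<bind> channel"
  unfolding noisy_joint_def channel_def ..

lemma channel_branch_in_subprob_algebra:
  "(if b then return borel (x, x)
    else distr (density lborel (\<lambda>xt. ennreal (q x xt))) borel (\<lambda>xt. (x, xt)))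
   \<in> space (subprob_algebra borel)"
proof -
  have "prob_space (density lborel (\<lambda>y. ennreal (q x y)))"
    by (rule prob_spaceI) (subst emeasure_density; simp add: q_prob)
  moreover have "(\<lambda>y. (x, y)) \<in> density lborel (\<lambda>y. ennreal (q x y)) \<rightarrow>\<^sub>M borel"
    by (simp add: borel_prod[symmetric])
  ultimately have "subprob_space (distr (density lborel (\<lambda>y. ennreal (q x y))) borel (\<lambda>y. (x, y)))"
    by (intro prob_space_imp_subprob_space prob_space.prob_space_distr)
  then show ?thesis
    by (simp add: space_subprob_algebra subprob_space_return)
qed

lemma nn_integral_channel:
  assumes [measurable]: "h \<in> borel_measurable (borel \<Otimes>\<^sub>M borel)"
  shows "(\<integral>\<^sup>+ z. h z \<partial>channel x)
    = ennreal \<beta> * h (x, x) + ennreal (1 - \<beta>) * (\<integral>\<^sup>+ y. ennreal (q x y) * h (x, y) \<partial>lborel)"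
proof -
  have h: "h \<in> borel_measurable borel"
    by (metis assms borel_prod)
  have "(\<integral>\<^sup>+ z. h z \<partial>channel x)
      = (\<integral>\<^sup>+ z. h z \<partial>return borel (x, x)) * \<beta>
        + (\<integral>\<^sup>+ z. h z \<partial>distr (density lborel (\<lambda>y. ennreal (q x y))) borel (\<lambda>y. (x, y))) * (1 - \<beta>)"
    unfolding channel_def using beta channel_branch_in_subprob_algebra
    by (subst nn_integral_bind[OF h]) (auto simp: nn_integral_bernoulli_pmf)
  also have "(\<integral>\<^sup>+ z. h z \<partial>return borel (x, x)) = h (x, x)"
    using h by (simp add: nn_integral_return)
  also have "(\<integral>\<^sup>+ z. h z \<partial>distr (density lborel (\<lambda>y. ennreal (q x y))) borel (\<lambda>y. (x, y)))
      = (\<integral>\<^sup>+ y. ennreal (q x y) * h (x, y) \<partial>lborel)"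
    using h by (simp add: nn_integral_distr nn_integral_density borel_prod[symmetric])
  finally show ?thesis
    by (simp add: mult.commute)
qed

lemma sets_channel [measurable_cong]: "sets (channel x) = sets (borel \<Otimes>\<^sub>M borel)"
  unfolding channel_def borel_prod
  by (rule sets_bind) (auto simp: channel_branch_in_subprob_algebra)

lemma prob_space_channel: "prob_space (channel x)"
proof
  have "emeasure (channel x) (space (channel x)) = (\<integral>\<^sup>+ z. 1 \<partial>channel x)"
    by simp
  also have "\<dots> = 1"
    using beta by (subst nn_integral_channel) (simp_all add: q_prob ennreal_plus[symmetric] del: ennreal_plus)
  finally show "emeasure (channel x) (space (channel x)) = 1" .
qed

lemma channel_measurable: "channel \<in> lborel \<rightarrow>\<^sub>M subprob_algebra borel"
proof (rule measurable_subprob_algebra)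
  show "subprob_space (channel x)" for x
    by (rule prob_space_imp_subprob_space[OF prob_space_channel])
  show "sets (channel x) = sets borel" for x
    by (metis sets_channel borel_prod)
  fix A :: "('a \<times> 'a) set"
  assume "A \<in> sets borel"
  then have [measurable]: "A \<in> sets (borel \<Otimes>\<^sub>M borel)"
    unfolding borel_prod .
  have "emeasure (channel x) A
      = ennreal \<beta> * indicator A (x, x) + ennreal (1 - \<beta>) * (\<integral>\<^sup>+ y. ennreal (q x y) * indicator A (x, y) \<partial>lborel)"
    for x
    using nn_integral_channel[of "indicator A" x] by (simp add: sets_channel)
  then show "(\<lambda>x. emeasure (channel x) A) \<in> borel_measurable lborel"
    by simp measurable
qed

lemma sets_joint [measurable_cong]: "sets joint = sets (borel \<Otimes>\<^sub>M borel)"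
  unfolding joint_eq_bind_channel
  by (rule sets_bind) (auto simp: sets_channel prob_space_channel prob_space_imp_subprob_space
      space_subprob_algebra)

lemma nn_integral_joint:
  assumes [measurable]: "h \<in> borel_measurable (borel \<Otimes>\<^sub>M borel)"
  shows "(\<integral>\<^sup>+ z. h z \<partial>joint) = (\<integral>\<^sup>+ x. ennreal (p x) *
     (ennreal \<beta> * h (x, x) + ennreal (1 - \<beta>) * (\<integral>\<^sup>+ y. ennreal (q x y) * h (x, y) \<partial>lborel)) \<partial>lborel)"
proof -
  have "h \<in> borel_measurable borel"
    by (metis assms borel_prod)
  then have "(\<integral>\<^sup>+ z. h z \<partial>joint) = (\<integral>\<^sup>+ x. \<integral>\<^sup>+ z. h z \<partial>channel x \<partial>density lborel (\<lambda>x. ennreal (p x)))"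
    unfolding joint_eq_bind_channel using channel_measurable by (intro nn_integral_bind) simp_all
  then show ?thesis
    by (simp add: nn_integral_density nn_integral_channel)
qed

lemma nn_integral_joint_fst:
  assumes [measurable]: "g \<in> borel_measurable borel"
  shows "(\<integral>\<^sup>+ z. g (fst z) \<partial>joint) = (\<integral>\<^sup>+ x. ennreal (p x) * g x \<partial>lborel)"
proof -
  have "ennreal \<beta> * g x + ennreal (1 - \<beta>) * (\<integral>\<^sup>+ y. ennreal (q x y) * g x \<partial>lborel) = g x" for x
    using beta by (simp add: nn_integral_multc q_prob distrib_right[symmetric] ennreal_plus[symmetric]
        del: ennreal_plus)
  then show ?thesis
    by (simp add: nn_integral_joint)
qed

text \<open>The Lebesgue density in the observation y of the image of the measure h d(joint)
  under the projection to the observation.\<close>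
definition cond_nn_integral :: "('a \<times> 'a \<Rightarrow> ennreal) \<Rightarrow> 'a \<Rightarrow> ennreal" where
  "cond_nn_integral h y = ennreal \<beta> * (ennreal (p y) * h (y, y))
     + ennreal (1 - \<beta>) * (\<integral>\<^sup>+ x. ennreal (q x y * p x) * h (x, y) \<partial>lborel)"

lemma cond_nn_integral_measurable:
  assumes [measurable]: "h \<in> borel_measurable (borel \<Otimes>\<^sub>M borel)"
  shows "cond_nn_integral h \<in> borel_measurable lborel"
  unfolding cond_nn_integral_def[abs_def] by measurable

lemma nn_integral_joint_cond:
  assumes [measurable]: "h \<in> borel_measurable (borel \<Otimes>\<^sub>M borel)"
  shows "(\<integral>\<^sup>+ z. h z \<partial>joint) = (\<integral>\<^sup>+ y. cond_nn_integral h y \<partial>lborel)"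
proof -
  let ?F = "\<lambda>x y. ennreal (q x y * p x) * h (x, y)"
  have "ennreal (p x) * (ennreal \<beta> * h (x, x) + ennreal (1 - \<beta>) * (\<integral>\<^sup>+ y. ennreal (q x y) * h (x, y) \<partial>lborel))
      = ennreal \<beta> * (ennreal (p x) * h (x, x)) + ennreal (1 - \<beta>) * (\<integral>\<^sup>+ y. ?F x y \<partial>lborel)" for x
    by (simp add: distrib_left nn_integral_cmult[symmetric] ennreal_mult q_nonneg p_nonneg ac_simps)
  then have "(\<integral>\<^sup>+ z. h z \<partial>joint)
      = (\<integral>\<^sup>+ x. ennreal \<beta> * (ennreal (p x) * h (x, x)) \<partial>lborel)
        + ennreal (1 - \<beta>) * (\<integral>\<^sup>+ x. \<integral>\<^sup>+ y. ?F x y \<partial>lborel \<partial>lborel)"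
    by (simp add: nn_integral_joint nn_integral_add nn_integral_cmult)
  also have "(\<integral>\<^sup>+ x. \<integral>\<^sup>+ y. ?F x y \<partial>lborel \<partial>lborel) = (\<integral>\<^sup>+ y. \<integral>\<^sup>+ x. ?F x y \<partial>lborel \<partial>lborel)"
    by (rule lborel_pair.Fubini') measurable
  finally show ?thesis
    by (simp add: cond_nn_integral_def nn_integral_add nn_integral_cmult)
qed

lemma nn_integral_joint_moment_finite: "(\<integral>\<^sup>+ z. ennreal (1 + (norm (fst z))\<^sup>2) \<partial>joint) < \<infinity>"
proof -
  have "integrable lborel (\<lambda>x. p x * (norm x)\<^sup>2)"
    using p_second_moment p_nonneg by (simp add: integrable_density)
  moreover have "integrable lborel p"
    using p_prob p_nonneg by (intro integrableI_nonneg) auto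
  ultimately have "integrable lborel (\<lambda>x. p x * (1 + (norm x)\<^sup>2))"
    by (simp add: distrib_left)
  then have "(\<integral>\<^sup>+ x. ennreal (p x * (1 + (norm x)\<^sup>2)) \<partial>lborel) < \<infinity>"
    using p_nonneg by (simp add: integrable_iff_bounded)
  moreover have "(\<integral>\<^sup>+ z. ennreal (1 + (norm (fst z))\<^sup>2) \<partial>joint)
      = (\<integral>\<^sup>+ x. ennreal (p x * (1 + (norm x)\<^sup>2)) \<partial>lborel)"
    by (subst nn_integral_joint_fst) (simp_all add: ennreal_mult' p_nonneg)
  ultimately show ?thesis
    by simp
qed

lemma integrable_joint_fst_sq: "integrable joint (\<lambda>z. (norm (fst z))\<^sup>2)"
proof (rule integrableI_nonneg)
  show "(\<integral>\<^sup>+ z. ennreal ((norm (fst z))\<^sup>2) \<partial>joint) < \<infinity>"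
    by (rule le_less_trans[OF nn_integral_mono nn_integral_joint_moment_finite]) simp
qed auto

definition posterior_integrable :: "'a \<Rightarrow> bool" where
  "posterior_integrable y \<longleftrightarrow>
     integrable lborel (\<lambda>x. q x y * p x) \<and> integrable lborel (\<lambda>x. q x y * p x * (norm x)\<^sup>2)"

lemma AE_posterior_integrable: "AE y in lborel. posterior_integrable y"
proof -
  let ?h = "\<lambda>z. ennreal (1 + (norm (fst z))\<^sup>2)"
  \<comment> \<open>the finite second moment of x forces finite posterior mass and second moment at almost every y\<close>
  have h: "?h \<in> borel_measurable (borel \<Otimes>\<^sub>M borel)"
    by measurable
  have "AE y in lborel. cond_nn_integral ?h y \<noteq> \<infinity>"
    using nn_integral_joint_moment_finite unfolding nn_integral_joint_cond[OF h]
    by (intro nn_integral_PInf_AE cond_nn_integral_measurable[OF h]) simp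
  then show ?thesis
  proof eventually_elim
    case (elim y)
    then have fin: "(\<integral>\<^sup>+ x. ennreal (q x y * p x * (1 + (norm x)\<^sup>2)) \<partial>lborel) < \<infinity>"
      using beta by (simp add: cond_nn_integral_def ennreal_mult_eq_top_iff ennreal_mult[symmetric]
          p_nonneg q_nonneg top.not_eq_extremum del: ennreal_plus)
    have "integrable lborel (\<lambda>x. q x y * p x * (1 + (norm x)\<^sup>2))"
      using fin p_nonneg q_nonneg by (intro integrableI_nonneg) auto
    moreover have "norm (q x y * p x) \<le> norm (q x y * p x * (1 + (norm x)\<^sup>2))"
      and "norm (q x y * p x * (norm x)\<^sup>2) \<le> norm (q x y * p x * (1 + (norm x)\<^sup>2))" for x
      using p_nonneg[of x] q_nonneg[of x y] by (simp_all add: algebra_simps)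
    ultimately show ?case
      unfolding posterior_integrable_def
      by (auto intro: Bochner_Integration.integrable_bound)
  qed
qed

definition q_moment1 :: "'a \<Rightarrow> 'a" where
  "q_moment1 y = (\<integral>x. (q x y * p x) *\<^sub>R x \<partial>lborel)"

definition obs_density :: "'a \<Rightarrow> real" where
  "obs_density y = \<beta> * p y + (1 - \<beta>) * q_marg p q y"

lemma q_marg_nonneg: "0 \<le> q_marg p q y"
  unfolding q_marg_def by (intro integral_nonneg_AE) (simp add: p_nonneg q_nonneg)

lemma obs_density_nonneg: "0 \<le> obs_density y"
  unfolding obs_density_def using beta p_nonneg[of y] q_marg_nonneg[of y] by simp

lemma integrable_q_moment1:
  assumes "posterior_integrable y"
  shows "integrable lborel (\<lambda>x. (q x y * p x) *\<^sub>R x)"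
  using assms unfolding posterior_integrable_def
  by (intro integrable_weighted_first_moment) (auto simp: p_nonneg q_nonneg)

lemma q_moment1_eq_0:
  assumes "posterior_integrable y" and "q_marg p q y = 0"
  shows "q_moment1 y = 0"
proof -
  have "AE x in lborel. q x y * p x = 0"
    using assms unfolding posterior_integrable_def q_marg_def
    by (subst integral_nonneg_eq_0_iff_AE[symmetric]) (auto simp: p_nonneg q_nonneg)
  then have "AE x in lborel. (q x y * p x) *\<^sub>R x = 0"
    by eventually_elim simp
  then show ?thesis
    unfolding q_moment1_def by (rule integral_eq_zero_AE)
qed

lemma f_star_vertex:
  assumes "posterior_integrable y"
  shows "obs_density y *\<^sub>R f_star \<beta> p q y = (\<beta> * p y) *\<^sub>R y + (1 - \<beta>) *\<^sub>R q_moment1 y"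
proof (cases "q_marg p q y = 0")
  case True
  \<comment> \<open>g_star y divides by zero here, but its weight or q_moment1 y vanishes\<close>
  then show ?thesis
    using q_moment1_eq_0[OF assms True]
    by (cases "p y = 0") (simp_all add: obs_density_def f_star_def omega_def)
next
  case False
  then have Q: "0 < q_marg p q y"
    using q_marg_nonneg[of y] by simp
  define A where "A = p y + (1 - \<beta>) / \<beta> * q_marg p q y"
  have A: "0 < A"
    unfolding A_def using beta Q p_nonneg[of y] by (simp add: add_nonneg_pos)
  have D: "obs_density y = \<beta> * A"
    unfolding A_def obs_density_def using beta by (simp add: field_simps)
  have omega: "omega \<beta> p q y = p y / A"
    unfolding omega_def A_def ..
  have "obs_density y * ((1 - p y / A) * (1 / q_marg p q y)) = \<beta> * (A - p y) / q_marg p q y"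
    using A Q by (simp add: D field_simps)
  also have "\<dots> = 1 - \<beta>"
    using beta Q by (simp add: A_def)
  finally have "obs_density y * omega \<beta> p q y = \<beta> * p y"
    and "obs_density y * ((1 - omega \<beta> p q y) * (1 / q_marg p q y)) = 1 - \<beta>"
    using A by (simp_all add: D omega)
  then show ?thesis
    by (simp add: f_star_def g_star_def q_moment1_def scaleR_add_right)
qed

lemma f_star_measurable [measurable]: "f_star \<beta> p q \<in> borel_measurable borel"
  unfolding f_star_def[abs_def] omega_def[abs_def] g_star_def[abs_def] q_marg_def
  by measurable

text \<open>Unnormalised: divided by obs_density y it is the posterior expected loss of predicting v
  from the observation y.\<close>
definition cond_risk :: "'a \<Rightarrow> 'a \<Rightarrow> real" where
  "cond_risk y v = \<beta> * p y * (norm (v - y))\<^sup>2 + (1 - \<beta>) * (\<integral>x. q x y * p x * (norm (v - x))\<^sup>2 \<partial>lborel)"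

lemma cond_risk_nonneg: "0 \<le> cond_risk y v"
proof -
  have "0 \<le> (\<integral>x. q x y * p x * (norm (v - x))\<^sup>2 \<partial>lborel)"
    by (intro integral_nonneg_AE) (simp add: p_nonneg q_nonneg)
  then show ?thesis
    unfolding cond_risk_def using beta p_nonneg[of y] by simp
qed

lemma
  assumes "posterior_integrable y"
  shows integrable_posterior_sq_dist: "integrable lborel (\<lambda>x. q x y * p x * (norm (v - x))\<^sup>2)"
    and integral_posterior_sq_dist: "(\<integral>x. q x y * p x * (norm (v - x))\<^sup>2 \<partial>lborel)
      = q_marg p q y * (norm v)\<^sup>2 - 2 * (v \<bullet> q_moment1 y) + (\<integral>x. q x y * p x * (norm x)\<^sup>2 \<partial>lborel)"
  using integral_weighted_norm_diff_power2[of lborel "\<lambda>x. q x y * p x"] assms integrable_q_moment1[OF assms]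
  unfolding posterior_integrable_def q_marg_def q_moment1_def by auto

lemma cond_risk_completion:
  assumes "posterior_integrable y"
  shows "cond_risk y v = cond_risk y (f_star \<beta> p q y) + obs_density y * (norm (v - f_star \<beta> p q y))\<^sup>2"
  unfolding cond_risk_def obs_density_def integral_posterior_sq_dist[OF assms]
  by (rule quadratic_completion[OF f_star_vertex[OF assms, unfolded obs_density_def]])

lemma cond_nn_integral_sq_loss:
  assumes "posterior_integrable y"
  shows "cond_nn_integral (\<lambda>z. ennreal ((norm (f (snd z) - fst z))\<^sup>2)) y = ennreal (cond_risk y (f y))"
proof -
  have "(\<integral>\<^sup>+ x. ennreal (q x y * p x) * ennreal ((norm (f y - x))\<^sup>2) \<partial>lborel)
      = ennreal (\<integral>x. q x y * p x * (norm (f y - x))\<^sup>2 \<partial>lborel)"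
    using integrable_posterior_sq_dist[OF assms]
    by (simp add: nn_integral_eq_integral ennreal_mult'[symmetric] p_nonneg q_nonneg)
  moreover have "0 \<le> (\<integral>x. q x y * p x * (norm (f y - x))\<^sup>2 \<partial>lborel)"
    by (intro integral_nonneg_AE) (simp add: p_nonneg q_nonneg)
  ultimately have "cond_nn_integral (\<lambda>z. ennreal ((norm (f (snd z) - fst z))\<^sup>2)) y
      = ennreal (\<beta> * p y * (norm (f y - y))\<^sup>2)
        + ennreal ((1 - \<beta>) * (\<integral>x. q x y * p x * (norm (f y - x))\<^sup>2 \<partial>lborel))"
    using beta p_nonneg[of y] by (simp add: cond_nn_integral_def ennreal_mult'[symmetric] mult.assoc)
  also have "\<dots> = ennreal (cond_risk y (f y))"
    using \<open>0 \<le> (\<integral>x. _ \<partial>lborel)\<close> beta p_nonneg[of y] by (simp add: cond_risk_def ennreal_plus)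
  finally show ?thesis .
qed

lemma cond_nn_integral_snd:
  assumes "posterior_integrable y"
  shows "cond_nn_integral (\<lambda>z. g (snd z)) y = ennreal (obs_density y) * g y"
proof -
  have "(\<integral>\<^sup>+ x. ennreal (q x y * p x) \<partial>lborel) = ennreal (q_marg p q y)"
    using assms unfolding posterior_integrable_def q_marg_def
    by (intro nn_integral_eq_integral) (auto simp: p_nonneg q_nonneg)
  then have "cond_nn_integral (\<lambda>z. g (snd z)) y
      = (ennreal \<beta> * ennreal (p y) + ennreal (1 - \<beta>) * ennreal (q_marg p q y)) * g y"
    by (simp add: cond_nn_integral_def nn_integral_multc distrib_right mult.assoc)
  also have "\<dots> = ennreal (obs_density y) * g y"
    using beta p_nonneg[of y] q_marg_nonneg[of y] by (simp add: obs_density_def ennreal_mult ennreal_plus)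
  finally show ?thesis .
qed

lemma nn_integral_sq_loss_decomposition:
  assumes [measurable]: "f \<in> borel_measurable borel"
  shows "(\<integral>\<^sup>+ z. ennreal ((norm (f (snd z) - fst z))\<^sup>2) \<partial>joint)
    = (\<integral>\<^sup>+ z. ennreal ((norm (f_star \<beta> p q (snd z) - fst z))\<^sup>2) \<partial>joint)
      + (\<integral>\<^sup>+ z. ennreal ((norm (f (snd z) - f_star \<beta> p q (snd z)))\<^sup>2) \<partial>joint)"
    (is "(\<integral>\<^sup>+ z. ?loss z \<partial>joint) = (\<integral>\<^sup>+ z. ?loss_star z \<partial>joint) + (\<integral>\<^sup>+ z. ?dist z \<partial>joint)")
proof -
  have loss: "?loss \<in> borel_measurable (borel \<Otimes>\<^sub>M borel)"
    by measurable
  have loss_star: "?loss_star \<in> borel_measurable (borel \<Otimes>\<^sub>M borel)"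
    by measurable
  have dist: "?dist \<in> borel_measurable (borel \<Otimes>\<^sub>M borel)"
    by measurable
  have "AE y in lborel. cond_nn_integral ?loss y = cond_nn_integral ?loss_star y + cond_nn_integral ?dist y"
    using AE_posterior_integrable
  proof eventually_elim
    case (elim y)
    have "cond_nn_integral ?loss y = ennreal (cond_risk y (f y))"
      by (rule cond_nn_integral_sq_loss[OF elim])
    also have "\<dots> = ennreal (cond_risk y (f_star \<beta> p q y))
        + ennreal (obs_density y) * ennreal ((norm (f y - f_star \<beta> p q y))\<^sup>2)"
      using cond_risk_nonneg obs_density_nonneg
      by (simp add: cond_risk_completion[OF elim, of "f y"] ennreal_plus ennreal_mult)
    also have "\<dots> = cond_nn_integral ?loss_star y + cond_nn_integral ?dist y"
      by (simp only: cond_nn_integral_sq_loss[OF elim]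
          cond_nn_integral_snd[OF elim, of "\<lambda>y. ennreal ((norm (f y - f_star \<beta> p q y))\<^sup>2)"])
    finally show ?case .
  qed
  then have "(\<integral>\<^sup>+ y. cond_nn_integral ?loss y \<partial>lborel)
      = (\<integral>\<^sup>+ y. cond_nn_integral ?loss_star y + cond_nn_integral ?dist y \<partial>lborel)"
    by (rule nn_integral_cong_AE)
  also have "\<dots> = (\<integral>\<^sup>+ y. cond_nn_integral ?loss_star y \<partial>lborel) + (\<integral>\<^sup>+ y. cond_nn_integral ?dist y \<partial>lborel)"
    using cond_nn_integral_measurable[OF loss_star] cond_nn_integral_measurable[OF dist]
    by (intro nn_integral_add) simp_all
  finally show ?thesis
    unfolding nn_integral_joint_cond[OF loss] nn_integral_joint_cond[OF loss_star]
      nn_integral_joint_cond[OF dist] .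
qed

lemma admissible_f_star: "admissible joint (f_star \<beta> p q)"
  unfolding admissible_def
proof
  \<comment> \<open>the decomposition for the estimator 0 bounds E |f_star(x~)|^2 by E |x|^2\<close>
  have "(\<integral>\<^sup>+ z. ennreal ((norm (f_star \<beta> p q (snd z)))\<^sup>2) \<partial>joint)
      \<le> (\<integral>\<^sup>+ z. ennreal ((norm (fst z))\<^sup>2) \<partial>joint)"
    using nn_integral_sq_loss_decomposition[of "\<lambda>_. 0"] by (simp add: add_increasing)
  also have "\<dots> < \<infinity>"
    using integrable_joint_fst_sq by (simp add: integrable_iff_bounded)
  finally show "integrable joint (\<lambda>z. (norm (f_star \<beta> p q (snd z)))\<^sup>2)"
    by (intro integrableI_nonneg) auto
qed measurable

lemma ennreal_sq_risk:
  assumes "admissible joint f"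
  shows "ennreal (sq_risk joint f) = (\<integral>\<^sup>+ z. ennreal ((norm (f (snd z) - fst z))\<^sup>2) \<partial>joint)"
proof -
  have [measurable]: "f \<in> borel_measurable borel"
    and "integrable joint (\<lambda>z. (norm (f (snd z)))\<^sup>2)"
    using assms by (simp_all add: admissible_def)
  have int: "integrable joint (\<lambda>z. (norm (f (snd z) - fst z))\<^sup>2)"
  proof (rule Bochner_Integration.integrable_bound)
    show "integrable joint (\<lambda>z. 2 * (norm (f (snd z)))\<^sup>2 + 2 * (norm (fst z))\<^sup>2)"
      using \<open>integrable joint (\<lambda>z. (norm (f (snd z)))\<^sup>2)\<close> integrable_joint_fst_sq by simp
    show "AE z in joint. norm ((norm (f (snd z) - fst z))\<^sup>2)
        \<le> norm (2 * (norm (f (snd z)))\<^sup>2 + 2 * (norm (fst z))\<^sup>2)"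
      by (intro AE_I2) (simp add: norm_diff_power2_le)
  qed measurable
  show ?thesis
    unfolding sq_risk_def power2_norm_eq_inner[symmetric]
    using nn_integral_eq_integral[OF int] by simp
qed

lemma sq_risk_decomposition:
  assumes "admissible joint f"
  shows "ennreal (sq_risk joint f) = ennreal (sq_risk joint (f_star \<beta> p q))
    + (\<integral>\<^sup>+ z. ennreal ((norm (f (snd z) - f_star \<beta> p q (snd z)))\<^sup>2) \<partial>joint)"
proof -
  have "f \<in> borel_measurable borel"
    using assms by (simp add: admissible_def)
  then show ?thesis
    unfolding ennreal_sq_risk[OF assms] ennreal_sq_risk[OF admissible_f_star]
    by (rule nn_integral_sq_loss_decomposition)
qed

lemma sq_risk_f_star_le:
  assumes "admissible joint f"
  shows "sq_risk joint (f_star \<beta> p q) \<le> sq_risk joint f"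
proof -
  have "ennreal (sq_risk joint (f_star \<beta> p q)) \<le> ennreal (sq_risk joint f)"
    unfolding sq_risk_decomposition[OF assms] by (rule add_increasing2) simp_all
  then show ?thesis
    by (simp add: ennreal_le_iff[OF sq_risk_nonneg])
qed

lemma AE_eq_f_star_if_sq_risk_eq:
  assumes "admissible joint f" and "sq_risk joint f = sq_risk joint (f_star \<beta> p q)"
  shows "AE y in distr joint borel snd. f y = f_star \<beta> p q y"
proof -
  have [measurable]: "f \<in> borel_measurable borel"
    using assms(1) by (simp add: admissible_def)
  have "(\<integral>\<^sup>+ z. ennreal ((norm (f (snd z) - f_star \<beta> p q (snd z)))\<^sup>2) \<partial>joint) = 0"
    using sq_risk_decomposition[OF assms(1)] by (simp add: assms(2))
  moreover have "(\<lambda>z. ennreal ((norm (f (snd z) - f_star \<beta> p q (snd z)))\<^sup>2)) \<in> borel_measurable joint"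
    by measurable
  ultimately have "AE z in joint. f (snd z) = f_star \<beta> p q (snd z)"
    by (simp add: nn_integral_0_iff_AE)
  moreover have "snd \<in> joint \<rightarrow>\<^sub>M borel"
    by measurable
  moreover have "{y \<in> space borel. f y = f_star \<beta> p q y} \<in> sets borel"
    by measurable
  ultimately show ?thesis
    by (simp add: AE_distr_iff)
qed

end

theorem theorem1:
  fixes \<beta> :: real and p :: "'a::euclidean_space \<Rightarrow> real" and q :: "'a \<Rightarrow> 'a \<Rightarrow> real"
  assumes beta: "0 < \<beta>" "\<beta> < 1"
    and p_meas: "p \<in> borel_measurable borel"
    and p_nonneg: "\<And>x. 0 \<le> p x"
    and p_prob: "(\<integral>\<^sup>+ x. ennreal (p x) \<partial>lborel) = 1"
    and p_second_moment: "integrable (density lborel (\<lambda>x. ennreal (p x))) (\<lambda>x. (norm x)\<^sup>2)"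
    and q_meas: "(\<lambda>(x, xt). q x xt) \<in> borel_measurable borel"
    and q_nonneg: "\<And>x xt. 0 \<le> q x xt"
    and q_prob: "\<And>x. (\<integral>\<^sup>+ xt. ennreal (q x xt) \<partial>lborel) = 1"
  shows "admissible (noisy_joint \<beta> p q) (f_star \<beta> p q)
    \<and> (\<forall>f. admissible (noisy_joint \<beta> p q) f \<longrightarrow>
           sq_risk (noisy_joint \<beta> p q) (f_star \<beta> p q) \<le> sq_risk (noisy_joint \<beta> p q) f)
    \<and> (\<forall>f. admissible (noisy_joint \<beta> p q) f
           \<and> sq_risk (noisy_joint \<beta> p q) f = sq_risk (noisy_joint \<beta> p q) (f_star \<beta> p q) \<longrightarrow>
           (AE xt in distr (noisy_joint \<beta> p q) borel snd. f xt = f_star \<beta> p q xt))"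
proof -
  interpret noisy_channel \<beta> p q
    by unfold_locales (fact assms)+
  show ?thesis
    using admissible_f_star sq_risk_f_star_le AE_eq_f_star_if_sq_risk_eq by blast
qed

end
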